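(* Let $\gamma>0$, $\tilde T>0$, and let $\zeta_1,\dots,\zeta_M\in\mathbb{R}$. For $i\in E$ define $$\alpha_i=\frac{\zeta_i^2}{2}+\sum_{j\in E\setminus\{i\}}\Big(\tilde q_{ij}\log\frac{\tilde q_{ij}}{q_{ij}}-\tilde q_{ij}+q_{ij}\Big),$$ let $\boldsymbol\alpha=(\alpha_1,\dots,\alpha_M)'$ and define $\boldsymbol\varphi(t)=(\varphi_1(t),\dots,\varphi_M(t))'$ by $$\boldsymbol\varphi(t)=-\int_t^{\tilde T}\exp\big(\tilde{\mathbf Q}(\tilde T-s)\big)\boldsymbol\alpha\,ds,\qquad t\in[0,\tilde T].$$ Then $\boldsymbol\varphi$ is the unique solution of the linear ODE system $$\varphi_i'(t)-\sum_{j\in E\setminus\{i\}}\tilde q_{ij}\big(\varphi_i(t)-\varphi_j(t)\big)-\alpha_i=0,\quad \varphi_i(\tilde T)=0,\quad i\in E,$$ and the functions $u_i(t,w)=-\exp(-\gamma w+\varphi_i(t))$, $i\in E$, form a classical solution on $[0,\tilde T]\times\mathbb{R}$ of the HJB system $$\partial_t u_i+\sup_{(\tilde\pi^{(0)},(\tilde\pi^{(j)})_{j\ne i})}\Big\{\Big(\zeta_i\tilde\pi^{(0)}-\sum_{j\in E\setminus\{i\}}\tilde q_{ij}\tilde\pi^{(j)}\Big)\partial_w u_i+\frac{(\tilde\pi^{(0)})^2}{2}\partial_{ww}u_i+\sum_{j\in E\setminus\{i\}}q_{ij}\big(u_j(t,w+\tilde\pi^{(j)})-u_i(t,w)\big)\Big\}=0,$$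 $i\in E$, $t\in[0,\tilde T)$, with terminal condition $u_i(\tilde T,w)=-e^{-\gamma w}$. Moreover $\partial_{ww}u_i=\gamma^2u_i<0$, and for each $(t,w,i)$ the supremum is attained (uniquely) at $$\tilde\pi^{(0)*}_i=\frac{\zeta_i}{\gamma},\qquad \tilde\pi^{(j)*}_i(t)=-\frac1\gamma\Big(\log\frac{\tilde q_{ij}}{q_{ij}}+\varphi_i(t)-\varphi_j(t)\Big),\quad j\in E\setminus\{i\},$$ which does not depend on $w$.
   Context: $E=\{1,\dots,M\}$. $\tilde{\mathbf Q}=(\tilde q_{ij})$ and $\mathbf Q=(q_{ij})$ are the generator matrices of a continuous-time irreducible Markov chain $\xi$ on $E$ under the risk-neutral measure $\mathbb Q$ and the physical measure $\mathbb P$ respectively (off-diagonal entries nonnegative, rows summing to zero), with $q_{ij}=0$ iff $\tilde q_{ij}=0$. All sums $\sum_{j\in E\setminus\{i\}}$ involving $\log(\tilde q_{ij}/q_{ij})$ are understood to run only over $j$ with $q_{ij}>0$ (terms with $q_{ij}=\tilde q_{ij}=0$ are omitted, and for such $j$ the corresponding variable $\tilde\pi^{(j)}$ does not appear). $\zeta_i$ is the market price of (Brownian) risk in regime $i$, i.e. $dZ^{\mathbb Q}_t=dZ^{\mathbb P}_t+\zeta(\xi_t)dt$. In the financial interpretation, $u_i(t,w)$ is the value function $\sup \mathbb E[-e^{-\gamma W_{\tilde T}}\mid W_t=w,\xi_t=i]$ of an investor trading futures, with transformed controls $\tilde\pi$ and wealth dynamics $dW_t=(\zeta(\xi_t)\tilde\pi^{(0)}_t+\sum_{j\neq\xi_t}(q(\xi_t,j)-\tilde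 q(\xi_t,j))\tilde\pi^{(j)}_t)dt+\tilde\pi^{(0)}_tdZ^{\mathbb P}_t+$ (jump of size $\tilde\pi^{(j)}_t$ when $\xi$ jumps from $\xi_{t-}$ to $j$, compensated under $\mathbb P$). *)

theory Defs
  imports "HOL-Analysis.Analysis"
begin

text \<open>The state space E is represented by a finite type 'n (so M = CARD('n)).
  Matrices are elements of real^'n^'n, entry (i,j) is A $ i $ j.\<close>

definition generator :: "real^'n^'n \<Rightarrow> bool" where
  "generator A \<longleftrightarrow> (\<forall>i j. i \<noteq> j \<longrightarrow> A $ i $ j \<ge> 0) \<and> (\<forall>i. (\<Sum>j\<in>UNIV. A $ i $ j) = 0)"

definition irreducible_gen :: "real^'n^'n \<Rightarrow> bool" where
  "irreducible_gen A \<longleftrightarrow> (\<forall>i j. (i, j) \<in> {(a, b). a \<noteq> b \<and> A $ a $ b > 0}\<^sup>*)"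

primrec matpow :: "real^'n^'n \<Rightarrow> nat \<Rightarrow> real^'n^'n" where
  "matpow A 0 = mat 1"
| "matpow A (Suc k) = A ** matpow A k"

definition mexp :: "real^'n^'n \<Rightarrow> real^'n^'n" where
  "mexp A = (\<Sum>k. (1 / fact k) *\<^sub>R matpow A k)"

definition alpha :: "real^'n^'n \<Rightarrow> real^'n^'n \<Rightarrow> ('n \<Rightarrow> real) \<Rightarrow> 'n \<Rightarrow> real" where
  "alpha Q Qt \<zeta> i = (\<zeta> i)\<^sup>2 / 2
     + (\<Sum>j\<in>{j. j \<noteq> i \<and> Q $ i $ j > 0}.
          Qt $ i $ j * ln (Qt $ i $ j / Q $ i $ j) - Qt $ i $ j + Q $ i $ j)"

definition alpha_vec :: "real^'n^'n \<Rightarrow> real^'n^'n \<Rightarrow> ('n \<Rightarrow> real) \<Rightarrow> real^'n" where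
  "alpha_vec Q Qt \<zeta> = (\<chi> i. alpha Q Qt \<zeta> i)"

definition phi :: "real \<Rightarrow> real^'n^'n \<Rightarrow> real^'n^'n \<Rightarrow> ('n \<Rightarrow> real) \<Rightarrow> real \<Rightarrow> real^'n" where
  "phi T Q Qt \<zeta> t = - integral {t..T} (\<lambda>s. mexp ((T - s) *\<^sub>R Qt) *v alpha_vec Q Qt \<zeta>)"

definition ode_rhs :: "real^'n^'n \<Rightarrow> real^'n^'n \<Rightarrow> ('n \<Rightarrow> real) \<Rightarrow> real^'n \<Rightarrow> 'n \<Rightarrow> real" where
  "ode_rhs Q Qt \<zeta> x i = (\<Sum>j\<in>UNIV - {i}. Qt $ i $ j * (x $ i - x $ j)) + alpha Q Qt \<zeta> i"

definition uval :: "real \<Rightarrow> real \<Rightarrow> real^'n^'n \<Rightarrow> real^'n^'n \<Rightarrow> ('n \<Rightarrow> real) \<Rightarrow> 'n \<Rightarrow> real \<Rightarrow> real \<Rightarrow> real" where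
  "uval \<gamma> T Q Qt \<zeta> i t w = - exp (- \<gamma> * w + phi T Q Qt \<zeta> t $ i)"

text \<open>The quantity inside the supremum of the HJB equation, for state i, given
  the values ut, uw, uww of the partial derivatives and the value function v,
  at control (p0, p) where p j is the jump control towards state j.\<close>
definition hjb_term :: "real^'n^'n \<Rightarrow> real^'n^'n \<Rightarrow> ('n \<Rightarrow> real) \<Rightarrow> ('n \<Rightarrow> real \<Rightarrow> real)
    \<Rightarrow> 'n \<Rightarrow> real \<Rightarrow> real \<Rightarrow> real \<Rightarrow> real \<times> ('n \<Rightarrow> real) \<Rightarrow> real" where
  "hjb_term Q Qt \<zeta> v i w uw uww c =
     (\<zeta> i * fst c - (\<Sum>j\<in>UNIV - {i}. Qt $ i $ j * snd c j)) * uw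
     + (fst c)\<^sup>2 / 2 * uww
     + (\<Sum>j\<in>UNIV - {i}. Q $ i $ j * (v j (w + snd c j) - v i w))"

definition pi_star :: "real \<Rightarrow> real \<Rightarrow> real^'n^'n \<Rightarrow> real^'n^'n \<Rightarrow> ('n \<Rightarrow> real) \<Rightarrow> 'n \<Rightarrow> real \<Rightarrow> 'n \<Rightarrow> real" where
  "pi_star \<gamma> T Q Qt \<zeta> i t j =
     - (1 / \<gamma>) * (ln (Qt $ i $ j / Q $ i $ j) + phi T Q Qt \<zeta> t $ i - phi T Q Qt \<zeta> t $ j)"

end

theory Submission
  imports Defs
begin

text \<open>Differentiating the variation-of-constants formula shows that \<open>\<phi>\<close> solves
  \<open>\<phi>' = \<alpha> - Qt \<phi>\<close>, \<open>\<phi>(T) = 0\<close>; uniqueness is a Gronwall estimate for \<open>\<parallel>\<psi> - \<phi>\<parallel>\<^sup>2\<close>.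
  For \<open>u\<^sub>i = -exp (-\<gamma> w + y\<^sub>i)\<close> the HJB Hamiltonian factors as
  \<open>exp (-\<gamma> w + y\<^sub>i) (ode_rhs y i - P(\<pi>))\<close>, where the penalty \<open>P\<close> is
  \<open>(\<gamma> \<pi>\<^sup>0 - \<zeta>\<^sub>i)\<^sup>2/2\<close> plus the gaps \<open>Qt\<^sub>i\<^sub>j (e\<^sup>z - 1 - z)\<close> of the jump controls.
  Since \<open>P \<ge> 0\<close> vanishes exactly at the stated controls, the supremum is
  \<open>exp (-\<gamma> w + \<phi>\<^sub>i) \<phi>\<^sub>i' = -\<partial>\<^sub>t u\<^sub>i\<close>.\<close>

lemma matpow_entry_abs_le:
  fixes A :: "real^'n^'n"
  shows "\<bar>matpow A k $ i $ j\<bar> \<le> (\<Sum>a\<in>UNIV. \<Sum>b\<in>UNIV. \<bar>A $ a $ b\<bar>) ^ k"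
proof (induction k arbitrary: i j)
  case 0
  then show ?case by (simp add: mat_def)
next
  case (Suc k)
  let ?m = "\<Sum>a\<in>UNIV. \<Sum>b\<in>UNIV. \<bar>A $ a $ b\<bar>"
  have "\<bar>matpow A (Suc k) $ i $ j\<bar> = \<bar>\<Sum>l\<in>UNIV. A $ i $ l * matpow A k $ l $ j\<bar>"
    by (simp add: matrix_matrix_mult_def)
  also have "\<dots> \<le> (\<Sum>l\<in>UNIV. \<bar>A $ i $ l\<bar>) * ?m ^ k"
    unfolding sum_distrib_right
    by (rule order_trans[OF sum_abs], rule sum_mono, simp add: abs_mult mult_left_mono Suc.IH)
  also have "\<dots> \<le> ?m * ?m ^ k"
    by (intro mult_right_mono member_le_sum[of i UNIV "\<lambda>a. \<Sum>b\<in>UNIV. \<bar>A $ a $ b\<bar>"])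
       (auto intro!: sum_nonneg zero_le_power)
  finally show ?case by simp
qed

lemma matpow_scaleR: "matpow (c *\<^sub>R A) k = c ^ k *\<^sub>R matpow A k"
  by (induction k) (auto simp: vec_eq_iff matrix_matrix_mult_def sum_distrib_left mult_ac)

definition mexp_coeff :: "real^'n^'n \<Rightarrow> 'n \<Rightarrow> 'n \<Rightarrow> nat \<Rightarrow> real" where
  "mexp_coeff A i j n = matpow A n $ i $ j / fact n"

lemma summable_mexp_coeff: "summable (\<lambda>n. mexp_coeff A i j n * x ^ n)"
proof (rule summable_comparison_test)
  let ?m = "\<Sum>a\<in>UNIV. \<Sum>b\<in>UNIV. \<bar>A $ a $ b\<bar>"
  show "summable (\<lambda>n. inverse (fact n) * (?m * \<bar>x\<bar>) ^ n)" by (rule summable_exp)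
  have "\<bar>matpow A n $ i $ j\<bar> * \<bar>x\<bar> ^ n / fact n \<le> ?m ^ n * \<bar>x\<bar> ^ n / fact n" for n
    by (intro divide_right_mono mult_right_mono matpow_entry_abs_le) auto
  then show "\<exists>N. \<forall>n\<ge>N. norm (mexp_coeff A i j n * x ^ n) \<le> inverse (fact n) * (?m * \<bar>x\<bar>) ^ n"
    by (simp add: mexp_coeff_def abs_mult power_abs power_mult_distrib divide_inverse mult_ac)
qed

lemma summable_mexp: "summable (\<lambda>k. (1 / fact k) *\<^sub>R matpow (A :: real^'n^'n) k)"
proof (rule summable_comparison_test)
  let ?m = "\<Sum>a\<in>UNIV. \<Sum>b\<in>UNIV. \<bar>A $ a $ b\<bar>"
  show "summable (\<lambda>n. real (CARD('n) * CARD('n)) * (inverse (fact n) * ?m ^ n))"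
    by (rule summable_mult, rule summable_exp)
  have "norm ((1 / fact n) *\<^sub>R matpow A n) \<le> real (CARD('n) * CARD('n)) * (inverse (fact n) * ?m ^ n)"
    for n
  proof -
    have "norm ((1 / fact n) *\<^sub>R matpow A n)
          \<le> (\<Sum>a\<in>UNIV. \<Sum>b\<in>UNIV. \<bar>((1 / fact n) *\<^sub>R matpow A n) $ a $ b\<bar>)"
      by (rule order_trans[OF _ sum_mono[OF norm_le_l1_cart]])
         (simp add: norm_vec_def L2_set_le_sum)
    also have "\<dots> \<le> (\<Sum>a\<in>(UNIV::'n set). \<Sum>b\<in>(UNIV::'n set). inverse (fact n) * ?m ^ n)"
      by (intro sum_mono) (simp add: abs_mult divide_inverse mult_left_mono matpow_entry_abs_le)
    finally show ?thesis by simp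
  qed
  then show "\<exists>N. \<forall>n\<ge>N. norm ((1 / fact n) *\<^sub>R matpow A n)
               \<le> real (CARD('n) * CARD('n)) * (inverse (fact n) * ?m ^ n)"
    by blast
qed

lemma mexp_scaleR_entry: "mexp (x *\<^sub>R A) $ i $ j = (\<Sum>n. mexp_coeff A i j n * x ^ n)"
proof -
  have "mexp (x *\<^sub>R A) $ i $ j = (\<Sum>k. ((1 / fact k) *\<^sub>R matpow (x *\<^sub>R A) k) $ i $ j)"
    unfolding mexp_def
    using bounded_linear.suminf[OF bounded_linear_compose[OF bounded_linear_vec_nth
        bounded_linear_vec_nth] summable_mexp]
    by (simp add: o_def)
  then show ?thesis
    by (simp add: matpow_scaleR mexp_coeff_def mult_ac)
qed

lemma mexp_zero: "mexp (0 :: real^'n^'n) = mat 1"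
proof -
  have "mexp (0 *\<^sub>R (0 :: real^'n^'n)) $ i $ j = mexp_coeff 0 i j 0" for i j
    by (simp only: mexp_scaleR_entry powser_zero)
  then show ?thesis
    by (simp add: vec_eq_iff mexp_coeff_def mat_def)
qed

lemma mexp_scaleR_entry_has_real_derivative:
  "((\<lambda>x. mexp (x *\<^sub>R A) $ i $ j) has_real_derivative (A ** mexp (x *\<^sub>R A)) $ i $ j) (at x)"
proof -
  have diffs_eq: "diffs (mexp_coeff A i j) n * x ^ n = (\<Sum>l\<in>UNIV. A $ i $ l * (mexp_coeff A l j n * x ^ n))"
    for n
  proof -
    have "diffs (mexp_coeff A i j) n = matpow A (Suc n) $ i $ j / fact n"
      by (simp add: diffs_def mexp_coeff_def field_simps del: of_nat_Suc)
    also have "\<dots> = (\<Sum>l\<in>UNIV. A $ i $ l * mexp_coeff A l j n)"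
      by (simp add: mexp_coeff_def matrix_matrix_mult_def sum_divide_distrib)
    finally show ?thesis by (simp add: sum_distrib_left mult_ac)
  qed
  have "(\<Sum>n. diffs (mexp_coeff A i j) n * x ^ n) = (\<Sum>l\<in>UNIV. \<Sum>n. A $ i $ l * (mexp_coeff A l j n * x ^ n))"
    unfolding diffs_eq by (rule suminf_sum) (intro summable_mult summable_mexp_coeff)
  also have "\<dots> = (A ** mexp (x *\<^sub>R A)) $ i $ j"
    by (simp add: suminf_mult summable_mexp_coeff mexp_scaleR_entry matrix_matrix_mult_def)
  finally have "(\<Sum>n. diffs (mexp_coeff A i j) n * x ^ n) = (A ** mexp (x *\<^sub>R A)) $ i $ j" .
  then show ?thesis
    unfolding mexp_scaleR_entry
    by (metis termdiffs_strong_converges_everywhere[OF summable_mexp_coeff])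
qed

lemma abs_inner_mult_vec_le:
  fixes B :: "real^'n^'n" and x :: "real^'n"
  shows "\<bar>x \<bullet> (B *v x)\<bar> \<le> (\<Sum>i\<in>UNIV. \<Sum>j\<in>UNIV. \<bar>B $ i $ j\<bar>) * (norm x)\<^sup>2"
proof -
  have "\<bar>x \<bullet> (B *v x)\<bar> = \<bar>\<Sum>i\<in>UNIV. \<Sum>j\<in>UNIV. B $ i $ j * (x $ i * x $ j)\<bar>"
    by (simp add: inner_vec_def matrix_vector_mult_def sum_distrib_left mult_ac)
  also have "\<dots> \<le> (\<Sum>i\<in>UNIV. \<Sum>j\<in>UNIV. \<bar>B $ i $ j\<bar> * (\<bar>x $ i\<bar> * \<bar>x $ j\<bar>))"
    by (rule order_trans[OF sum_abs sum_mono[OF order_trans[OF sum_abs]]]) (simp add: abs_mult)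
  also have "\<dots> \<le> (\<Sum>i\<in>UNIV. \<Sum>j\<in>UNIV. \<bar>B $ i $ j\<bar> * (norm x * norm x))"
    by (intro sum_mono mult_left_mono mult_mono component_le_norm_cart) auto
  finally show ?thesis
    by (simp add: power2_eq_square sum_distrib_right)
qed

text \<open>Gronwall: \<open>\<parallel>d s\<parallel>\<^sup>2 exp (c s)\<close> is nondecreasing on \<open>[t, b]\<close> and vanishes at \<open>b\<close>.\<close>
lemma linear_ode_terminal_zero:
  fixes d :: "real \<Rightarrow> real^'n" and B :: "real^'n^'n"
  assumes der: "\<And>t i. t \<in> {a..b} \<Longrightarrow>
      ((\<lambda>s. d s $ i) has_real_derivative (B *v d t) $ i) (at t within {a..b})"
    and terminal: "d b = 0" and t: "t \<in> {a..b}"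
  shows "d t = 0"
proof -
  define c where "c = 2 * (\<Sum>i\<in>UNIV. \<Sum>j\<in>UNIV. \<bar>B $ i $ j\<bar>)"
  define k where "k s = (norm (d s))\<^sup>2 * exp (c * s)" for s
  define k' where "k' s = (2 * (d s \<bullet> (B *v d s)) + c * (norm (d s))\<^sup>2) * exp (c * s)" for s
  have k_der: "(k has_real_derivative k' s) (at s within {a..b})" if "s \<in> {a..b}" for s
  proof -
    have "((\<lambda>s. \<Sum>i\<in>UNIV. d s $ i * d s $ i) has_real_derivative
            (\<Sum>i\<in>UNIV. (B *v d s) $ i * d s $ i + (B *v d s) $ i * d s $ i)) (at s within {a..b})"
      by (intro DERIV_sum DERIV_mult der that)
    then have "((\<lambda>s. (norm (d s))\<^sup>2) has_real_derivative 2 * (d s \<bullet> (B *v d s))) (at s within {a..b})"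
      by (simp add: power2_norm_eq_inner inner_vec_def sum_distrib_left mult_ac)
    moreover have "((\<lambda>s. exp (c * s)) has_real_derivative c * exp (c * s)) (at s within {a..b})"
      by (auto intro!: derivative_eq_intros)
    ultimately show ?thesis
      unfolding k_def k'_def by (rule DERIV_cong[OF DERIV_mult]) (simp add: algebra_simps)
  qed
  have k'_nonneg: "0 \<le> k' s" for s
  proof -
    have "0 \<le> 2 * (d s \<bullet> (B *v d s)) + c * (norm (d s))\<^sup>2"
      using abs_inner_mult_vec_le[of "d s" B] unfolding c_def by (simp add: abs_le_iff)
    then show ?thesis unfolding k'_def by simp
  qed
  have "k t \<le> k b"
  proof (rule DERIV_nonneg_imp_increasing_open[of t b k])
    show "t \<le> b" using t by simp
  next
    fix x assume "t < x" "x < b"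
    then have "(k has_real_derivative k' x) (at x)"
      using k_der[of x] at_within_Icc_at[of a x b] t by auto
    then show "\<exists>y. (k has_real_derivative y) (at x) \<and> 0 \<le> y"
      using k'_nonneg by blast
  next
    show "continuous_on {t..b} k"
      by (rule DERIV_continuous_on, rule DERIV_subset[OF k_der]) (use t in auto)
  qed
  then have "(norm (d t))\<^sup>2 \<le> 0"
    by (simp add: k_def terminal mult_le_0_iff)
  then show ?thesis by simp
qed

definition mexp_flow :: "real \<Rightarrow> real^'n^'n \<Rightarrow> real^'n \<Rightarrow> real \<Rightarrow> real^'n" where
  "mexp_flow T A a s = mexp ((T - s) *\<^sub>R A) *v a"

lemma mexp_flow_has_real_derivative:
  "((\<lambda>s. mexp_flow T A a s $ i) has_real_derivative - (A *v mexp_flow T A a s) $ i) (at s within S)"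
proof -
  have "((\<lambda>s. \<Sum>j\<in>UNIV. mexp ((T - s) *\<^sub>R A) $ i $ j * a $ j) has_real_derivative
          (\<Sum>j\<in>UNIV. (A ** mexp ((T - s) *\<^sub>R A)) $ i $ j * - 1 * a $ j)) (at s within S)"
    by (intro DERIV_sum DERIV_cmult_right DERIV_chain2[OF mexp_scaleR_entry_has_real_derivative]
        derivative_eq_intros) auto
  moreover have "(A *v mexp_flow T A a s) $ i = (\<Sum>j\<in>UNIV. (A ** mexp ((T - s) *\<^sub>R A)) $ i $ j * a $ j)"
    unfolding mexp_flow_def matrix_vector_mul_assoc by (simp add: matrix_vector_mult_def)
  ultimately show ?thesis
    by (simp add: mexp_flow_def matrix_vector_mult_def sum_negf)
qed

lemma continuous_on_mexp_flow: "continuous_on S (mexp_flow T A a)"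
proof -
  have "continuous_on S (\<lambda>s. \<chi> i. mexp_flow T A a s $ i)"
    by (intro continuous_on_vec_lambda DERIV_continuous_on[OF mexp_flow_has_real_derivative])
  then show ?thesis by simp
qed

lemma mexp_flow_terminal: "mexp_flow T A a T = a"
  by (simp add: mexp_flow_def mexp_zero)

lemma phi_eq_integral_mexp_flow:
  "phi T Q Qt \<zeta> t = - integral {t..T} (mexp_flow T Qt (alpha_vec Q Qt \<zeta>))"
  unfolding phi_def mexp_flow_def[abs_def] ..

lemma phi_has_vector_derivative:
  assumes "t \<in> {a..T}"
  shows "(phi T Q Qt \<zeta> has_vector_derivative mexp_flow T Qt (alpha_vec Q Qt \<zeta>) t) (at t within {a..T})"
  unfolding phi_eq_integral_mexp_flow[abs_def]
  using integral_has_vector_derivative'[OF continuous_on_mexp_flow assms]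
  by (auto intro!: derivative_eq_intros)

lemma phi_terminal: "phi T Q Qt \<zeta> T = 0"
  by (simp add: phi_def)

lemma ode_rhs_eq:
  assumes "generator Qt"
  shows "ode_rhs Q Qt \<zeta> x i = alpha Q Qt \<zeta> i - (Qt *v x) $ i"
proof -
  have "Qt $ i $ i = - (\<Sum>j\<in>UNIV - {i}. Qt $ i $ j)"
    using assms sum.remove[of UNIV i "\<lambda>j. Qt $ i $ j"] by (simp add: generator_def)
  moreover have "(Qt *v x) $ i = Qt $ i $ i * x $ i + (\<Sum>j\<in>UNIV - {i}. Qt $ i $ j * x $ j)"
    by (simp add: matrix_vector_mult_def sum.remove)
  ultimately show ?thesis
    by (simp add: ode_rhs_def right_diff_distrib sum_subtractf sum_distrib_left mult.commute)
qed

text \<open>\<open>mexp_flow + Qt \<phi>\<close> has zero derivative and equals \<open>\<alpha>\<close> at \<open>T\<close>.\<close>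
lemma phi_has_real_derivative_ode_rhs:
  assumes gen: "generator Qt" and t: "t \<in> {0..T}"
  shows "((\<lambda>s. phi T Q Qt \<zeta> s $ i) has_real_derivative ode_rhs Q Qt \<zeta> (phi T Q Qt \<zeta> t) i)
           (at t within {0..T})"
proof -
  let ?g = "mexp_flow T Qt (alpha_vec Q Qt \<zeta>)" and ?p = "phi T Q Qt \<zeta>"
  have p_der: "(?p has_vector_derivative ?g s) (at s within {0..T})" if "s \<in> {0..T}" for s
    by (rule phi_has_vector_derivative[OF that])
  have "((\<lambda>s. ?g s $ k + (Qt *v ?p s) $ k) has_real_derivative 0) (at s within {0..T})"
    if "s \<in> {0..T}" for s k
  proof -
    have "((\<lambda>s. (Qt *v ?p s) $ k) has_vector_derivative (Qt *v ?g s) $ k) (at s within {0..T})"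
      by (rule bounded_linear.has_vector_derivative[OF bounded_linear_compose[OF
            bounded_linear_vec_nth matrix_vector_mul_bounded_linear] p_der[OF that]])
    then have "((\<lambda>s. (Qt *v ?p s) $ k) has_real_derivative (Qt *v ?g s) $ k) (at s within {0..T})"
      by (simp add: has_real_derivative_iff_has_vector_derivative)
    from DERIV_add[OF mexp_flow_has_real_derivative[of T Qt "alpha_vec Q Qt \<zeta>" k] this]
    show ?thesis by simp
  qed
  then obtain c where "\<forall>s\<in>{0..T}. ?g s $ i + (Qt *v ?p s) $ i = c"
    using has_field_derivative_zero_constant[of "{0..T}"] by blast
  then have "?g t $ i + (Qt *v ?p t) $ i = ?g T $ i + (Qt *v ?p T) $ i"
    using t by auto
  then have "?g t $ i = alpha Q Qt \<zeta> i - (Qt *v ?p t) $ i"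
    by (simp add: mexp_flow_terminal phi_terminal alpha_vec_def algebra_simps)
  then show ?thesis
    using bounded_linear.has_vector_derivative[OF bounded_linear_vec_nth p_der[OF t], of i]
    by (simp add: ode_rhs_eq[OF gen] has_real_derivative_iff_has_vector_derivative)
qed

lemma phi_unique:
  assumes gen: "generator Qt"
    and \<psi>_der: "\<And>t i. t \<in> {0..T} \<Longrightarrow>
      ((\<lambda>s. \<psi> s $ i) has_real_derivative ode_rhs Q Qt \<zeta> (\<psi> t) i) (at t within {0..T})"
    and \<psi>_terminal: "\<psi> T = 0" and t: "t \<in> {0..T}"
  shows "\<psi> t = phi T Q Qt \<zeta> t"
proof -
  have "(\<lambda>s. \<psi> s - phi T Q Qt \<zeta> s) t = 0"
  proof (rule linear_ode_terminal_zero[where B = "- Qt", OF _ _ t])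
    fix s i assume s: "s \<in> {0..T}"
    show "((\<lambda>s. (\<psi> s - phi T Q Qt \<zeta> s) $ i) has_real_derivative
            (- Qt *v (\<psi> s - phi T Q Qt \<zeta> s)) $ i) (at s within {0..T})"
      using DERIV_diff[OF \<psi>_der[OF s, of i] phi_has_real_derivative_ode_rhs[OF gen s, of Q \<zeta> i]]
      by (simp add: ode_rhs_eq[OF gen] matrix_vector_mult_def sum_negf sum_subtractf algebra_simps)
  qed (simp add: \<psi>_terminal phi_terminal)
  then show ?thesis by simp
qed

lemma exp_gt_add_one_self:
  fixes x :: real
  assumes "x \<noteq> 0"
  shows "1 + x < exp x"
proof (cases "1 + x / 2 \<ge> 0")
  case True
  have "(1 + x / 2) * (1 + x / 2) \<le> exp (x / 2) * exp (x / 2)"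
    using True exp_ge_add_one_self[of "x / 2"] by (intro mult_mono) auto
  also have "\<dots> = exp x" by (simp flip: exp_add)
  finally have "1 + x + x * x / 4 \<le> exp x" by (simp add: algebra_simps)
  moreover have "x * x > 0" using assms by (auto simp: zero_less_mult_iff)
  ultimately show ?thesis by linarith
next
  case False
  then show ?thesis using exp_gt_zero[of x] by linarith
qed

definition exp_gap :: "real \<Rightarrow> real" where
  "exp_gap z = exp z - 1 - z"

lemma exp_gap_nonneg: "0 \<le> exp_gap z"
  using exp_ge_add_one_self[of z] unfolding exp_gap_def by linarith

lemma exp_gap_eq_0_iff: "exp_gap z = 0 \<longleftrightarrow> z = 0"
proof
  assume "exp_gap z = 0"
  then show "z = 0"
    using exp_gt_add_one_self[of z] unfolding exp_gap_def by (cases "z = 0") linarith+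
qed (simp add: exp_gap_def)

definition jump_gap :: "real^'n^'n \<Rightarrow> real^'n^'n \<Rightarrow> real \<Rightarrow> real^'n \<Rightarrow> 'n \<Rightarrow> 'n \<Rightarrow> real \<Rightarrow> real"
  where "jump_gap Q Qt \<gamma> y i j p =
    Qt $ i $ j * exp_gap (- \<gamma> * p + y $ j - y $ i - ln (Qt $ i $ j / Q $ i $ j))"

definition hjb_penalty :: "real^'n^'n \<Rightarrow> real^'n^'n \<Rightarrow> ('n \<Rightarrow> real) \<Rightarrow> real \<Rightarrow> real^'n \<Rightarrow> 'n
    \<Rightarrow> real \<times> ('n \<Rightarrow> real) \<Rightarrow> real" where
  "hjb_penalty Q Qt \<zeta> \<gamma> y i c =
    (\<gamma> * fst c - \<zeta> i)\<^sup>2 / 2 + (\<Sum>j\<in>UNIV - {i}. jump_gap Q Qt \<gamma> y i j (snd c j))"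

lemma jump_term_eq:
  assumes "0 < Q $ i $ j" "0 < Qt $ i $ j"
  shows "Q $ i $ j * (- exp (- \<gamma> * (w + p) + y $ j) + exp (- \<gamma> * w + y $ i))
           - Qt $ i $ j * p * \<gamma> * exp (- \<gamma> * w + y $ i)
         = exp (- \<gamma> * w + y $ i) * (Qt $ i $ j * (ln (Qt $ i $ j / Q $ i $ j) + y $ i - y $ j)
             + Q $ i $ j - Qt $ i $ j - jump_gap Q Qt \<gamma> y i j p)"
proof -
  define L where "L = ln (Qt $ i $ j / Q $ i $ j)"
  define z where "z = - \<gamma> * p + y $ j - y $ i - L"
  have "exp (- \<gamma> * (w + p) + y $ j) = exp (- \<gamma> * w + y $ i) * exp z * exp L"
    by (simp add: z_def algebra_simps flip: exp_add)
  also have "exp L = Qt $ i $ j / Q $ i $ j"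
    using assms by (simp add: L_def)
  finally show ?thesis
    using assms
    by (simp add: jump_gap_def exp_gap_def flip: L_def z_def) (simp add: z_def field_simps)
qed

lemma ode_rhs_eq_jump_sum:
  assumes genQ: "generator Q"
    and supp: "\<And>i j. i \<noteq> j \<Longrightarrow> (Q $ i $ j = 0 \<longleftrightarrow> Qt $ i $ j = 0)"
  shows "ode_rhs Q Qt \<zeta> y i = (\<zeta> i)\<^sup>2 / 2 + (\<Sum>j\<in>UNIV - {i}.
           Qt $ i $ j * (ln (Qt $ i $ j / Q $ i $ j) + y $ i - y $ j) + Q $ i $ j - Qt $ i $ j)"
proof -
  have "(\<Sum>j\<in>{j. j \<noteq> i \<and> Q $ i $ j > 0}. Qt $ i $ j * ln (Qt $ i $ j / Q $ i $ j) - Qt $ i $ j + Q $ i $ j)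
      = (\<Sum>j\<in>UNIV - {i}. Qt $ i $ j * ln (Qt $ i $ j / Q $ i $ j) - Qt $ i $ j + Q $ i $ j)"
    using genQ supp by (intro sum.mono_neutral_left) (auto simp: generator_def less_le)
  then show ?thesis
    by (simp add: ode_rhs_def alpha_def sum.distrib sum_subtractf algebra_simps)
qed

lemma hjb_term_exp_eq:
  assumes genQ: "generator Q" and genQt: "generator Qt"
    and supp: "\<And>i j. i \<noteq> j \<Longrightarrow> (Q $ i $ j = 0 \<longleftrightarrow> Qt $ i $ j = 0)"
  shows "hjb_term Q Qt \<zeta> (\<lambda>j x. - exp (- \<gamma> * x + y $ j)) i w
           (- \<gamma> * - exp (- \<gamma> * w + y $ i)) (\<gamma>\<^sup>2 * - exp (- \<gamma> * w + y $ i)) c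
         = exp (- \<gamma> * w + y $ i) * (ode_rhs Q Qt \<zeta> y i - hjb_penalty Q Qt \<zeta> \<gamma> y i c)"
proof -
  define K where "K = exp (- \<gamma> * w + y $ i)"
  define G where "G j = Qt $ i $ j * (ln (Qt $ i $ j / Q $ i $ j) + y $ i - y $ j) + Q $ i $ j - Qt $ i $ j"
    for j
  have jump: "Q $ i $ j * (- exp (- \<gamma> * (w + snd c j) + y $ j) + K) - Qt $ i $ j * snd c j * \<gamma> * K
      = K * (G j - jump_gap Q Qt \<gamma> y i j (snd c j))" if "j \<in> UNIV - {i}" for j
  proof (cases "Q $ i $ j = 0")
    case True
    with supp that show ?thesis by (simp add: G_def jump_gap_def)
  next
    case False
    with that genQ genQt supp[of i j] show ?thesis
      unfolding K_def G_def by (intro jump_term_eq) (auto simp: generator_def less_le)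
  qed
  have "hjb_term Q Qt \<zeta> (\<lambda>j x. - exp (- \<gamma> * x + y $ j)) i w (- \<gamma> * - K) (\<gamma>\<^sup>2 * - K) c
      = \<zeta> i * fst c * \<gamma> * K - (fst c)\<^sup>2 / 2 * \<gamma>\<^sup>2 * K
        + (\<Sum>j\<in>UNIV - {i}. Q $ i $ j * (- exp (- \<gamma> * (w + snd c j) + y $ j) + K)
              - Qt $ i $ j * snd c j * \<gamma> * K)"
    by (simp add: hjb_term_def K_def sum_subtractf sum.distrib sum_distrib_left algebra_simps)
  also have "\<dots> = \<zeta> i * fst c * \<gamma> * K - (fst c)\<^sup>2 / 2 * \<gamma>\<^sup>2 * K
        + K * ((\<Sum>j\<in>UNIV - {i}. G j) - (\<Sum>j\<in>UNIV - {i}. jump_gap Q Qt \<gamma> y i j (snd c j)))"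
    by (rule arg_cong[where f = "\<lambda>z. _ + z"], subst sum.cong[OF refl jump])
       (simp_all add: right_diff_distrib sum_subtractf sum_distrib_left)
  also have "\<dots> = K * (ode_rhs Q Qt \<zeta> y i - hjb_penalty Q Qt \<zeta> \<gamma> y i c)"
    by (simp add: ode_rhs_eq_jump_sum[OF genQ supp] hjb_penalty_def G_def power2_eq_square
        algebra_simps add_divide_distrib diff_divide_distrib)
  finally show ?thesis unfolding K_def .
qed

lemma hjb_penalty_nonneg:
  assumes "generator Qt"
  shows "0 \<le> hjb_penalty Q Qt \<zeta> \<gamma> y i c"
  using assms unfolding hjb_penalty_def jump_gap_def generator_def
  by (intro add_nonneg_nonneg sum_nonneg mult_nonneg_nonneg exp_gap_nonneg) auto

lemma hjb_penalty_eq_0_iff: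
  assumes gamma_pos: "\<gamma> > 0" and genQ: "generator Q" and genQt: "generator Qt"
    and supp: "\<And>i j. i \<noteq> j \<Longrightarrow> (Q $ i $ j = 0 \<longleftrightarrow> Qt $ i $ j = 0)"
  shows "hjb_penalty Q Qt \<zeta> \<gamma> y i c = 0 \<longleftrightarrow> fst c = \<zeta> i / \<gamma> \<and>
           (\<forall>j. j \<noteq> i \<and> Q $ i $ j > 0 \<longrightarrow>
              snd c j = - (1 / \<gamma>) * (ln (Qt $ i $ j / Q $ i $ j) + y $ i - y $ j))"
proof -
  have gap_nonneg: "0 \<le> jump_gap Q Qt \<gamma> y i j p" if "j \<noteq> i" for j p
    using that genQt exp_gap_nonneg unfolding jump_gap_def generator_def
    by (auto intro: mult_nonneg_nonneg)
  have gap_0: "jump_gap Q Qt \<gamma> y i j p = 0 \<longleftrightarrow>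
      (Q $ i $ j > 0 \<longrightarrow> p = - (1 / \<gamma>) * (ln (Qt $ i $ j / Q $ i $ j) + y $ i - y $ j))"
    if "j \<noteq> i" for j p
  proof -
    have "Q $ i $ j > 0 \<longleftrightarrow> Qt $ i $ j \<noteq> 0"
      using that supp[of i j] genQ by (auto simp: generator_def less_le)
    then show ?thesis
      using gamma_pos by (auto simp: jump_gap_def exp_gap_eq_0_iff field_simps)
  qed
  have gaps_0: "(\<Sum>j\<in>UNIV - {i}. jump_gap Q Qt \<gamma> y i j (snd c j)) = 0 \<longleftrightarrow>
      (\<forall>j\<in>UNIV - {i}. jump_gap Q Qt \<gamma> y i j (snd c j) = 0)"
    by (rule sum_nonneg_eq_0_iff) (auto intro: gap_nonneg)
  have "hjb_penalty Q Qt \<zeta> \<gamma> y i c = 0 \<longleftrightarrow> (\<gamma> * fst c - \<zeta> i)\<^sup>2 / 2 = 0 \<and>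
          (\<forall>j\<in>UNIV - {i}. jump_gap Q Qt \<gamma> y i j (snd c j) = 0)"
    unfolding hjb_penalty_def gaps_0[symmetric]
    by (rule add_nonneg_eq_0_iff) (auto intro!: sum_nonneg gap_nonneg)
  also have "\<dots> \<longleftrightarrow> fst c = \<zeta> i / \<gamma> \<and>
           (\<forall>j. j \<noteq> i \<and> Q $ i $ j > 0 \<longrightarrow>
              snd c j = - (1 / \<gamma>) * (ln (Qt $ i $ j / Q $ i $ j) + y $ i - y $ j))"
    using gamma_pos gap_0 by (auto simp: field_simps)
  finally show ?thesis .
qed

definition uval_dt :: "real \<Rightarrow> real \<Rightarrow> real^'n^'n \<Rightarrow> real^'n^'n \<Rightarrow> ('n \<Rightarrow> real) \<Rightarrow> 'n
    \<Rightarrow> real \<Rightarrow> real \<Rightarrow> real" where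
  "uval_dt \<gamma> T Q Qt \<zeta> i t w = uval \<gamma> T Q Qt \<zeta> i t w * ode_rhs Q Qt \<zeta> (phi T Q Qt \<zeta> t) i"

lemma uval_has_real_derivative_t:
  assumes "generator Qt" "t \<in> {0..T}"
  shows "((\<lambda>s. uval \<gamma> T Q Qt \<zeta> i s w) has_real_derivative uval_dt \<gamma> T Q Qt \<zeta> i t w)
           (at t within {0..T})"
  unfolding uval_def uval_dt_def
  by (rule derivative_eq_intros phi_has_real_derivative_ode_rhs[OF assms] refl)+ simp

lemma uval_has_real_derivative_w:
  "((\<lambda>x. uval \<gamma> T Q Qt \<zeta> i t x) has_real_derivative - \<gamma> * uval \<gamma> T Q Qt \<zeta> i t w) (at w)"
  unfolding uval_def by (rule derivative_eq_intros refl)+ simp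

lemma continuous_on_phi: "continuous_on {0..T} (phi T Q Qt \<zeta>)"
  unfolding continuous_on_eq_continuous_within
  using has_vector_derivative_continuous phi_has_vector_derivative by blast

lemma uval_hjb_equation:
  fixes Q Qt :: "real^'n^'n" and \<zeta> :: "'n \<Rightarrow> real" and \<gamma> T t w :: real and i :: 'n
  assumes gamma_pos: "\<gamma> > 0" and genQ: "generator Q" and genQt: "generator Qt"
    and supp: "\<And>i j. i \<noteq> j \<Longrightarrow> (Q $ i $ j = 0 \<longleftrightarrow> Qt $ i $ j = 0)"
  defines "H \<equiv> hjb_term Q Qt \<zeta> (\<lambda>j x. uval \<gamma> T Q Qt \<zeta> j t x) i w
                 (- \<gamma> * uval \<gamma> T Q Qt \<zeta> i t w) (\<gamma>\<^sup>2 * uval \<gamma> T Q Qt \<zeta> i t w)"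
    and "cstar \<equiv> (\<zeta> i / \<gamma>, pi_star \<gamma> T Q Qt \<zeta> i t)"
  shows "uval_dt \<gamma> T Q Qt \<zeta> i t w + (SUP c. H c) = 0"
    and "H c \<le> H cstar"
    and "(\<forall>c'. H c' \<le> H c) \<longrightarrow> fst c = \<zeta> i / \<gamma> \<and>
           (\<forall>j. j \<noteq> i \<and> Q $ i $ j > 0 \<longrightarrow> snd c j = pi_star \<gamma> T Q Qt \<zeta> i t j)"
proof -
  let ?y = "phi T Q Qt \<zeta> t"
  define K where "K = exp (- \<gamma> * w + ?y $ i)"
  have H_eq: "H c = K * (ode_rhs Q Qt \<zeta> ?y i - hjb_penalty Q Qt \<zeta> \<gamma> ?y i c)" for c
    unfolding H_def K_def uval_def by (rule hjb_term_exp_eq[OF genQ genQt supp])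
  have penalty_0_iff: "hjb_penalty Q Qt \<zeta> \<gamma> ?y i c = 0 \<longleftrightarrow> fst c = \<zeta> i / \<gamma> \<and>
      (\<forall>j. j \<noteq> i \<and> Q $ i $ j > 0 \<longrightarrow> snd c j = pi_star \<gamma> T Q Qt \<zeta> i t j)" for c
    using hjb_penalty_eq_0_iff[OF gamma_pos genQ genQt supp, of \<zeta> ?y i c] by (simp add: pi_star_def)
  have penalty_cstar: "hjb_penalty Q Qt \<zeta> \<gamma> ?y i cstar = 0"
    using penalty_0_iff[of cstar] by (simp add: cstar_def)
  then have H_cstar: "H cstar = K * ode_rhs Q Qt \<zeta> ?y i"
    by (simp add: H_eq)
  have H_le: "H c \<le> H cstar" for c
    using hjb_penalty_nonneg[OF genQt, of Q \<zeta> \<gamma> ?y i c] by (simp add: H_eq penalty_cstar K_def)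
  show "H c \<le> H cstar" by (rule H_le)
  have "(SUP c. H c) = H cstar"
    by (rule cSup_eq_maximum) (auto intro: H_le)
  then show "uval_dt \<gamma> T Q Qt \<zeta> i t w + (SUP c. H c) = 0"
    by (simp add: H_cstar uval_dt_def uval_def K_def)
  show "(\<forall>c'. H c' \<le> H c) \<longrightarrow> fst c = \<zeta> i / \<gamma> \<and>
      (\<forall>j. j \<noteq> i \<and> Q $ i $ j > 0 \<longrightarrow> snd c j = pi_star \<gamma> T Q Qt \<zeta> i t j)"
  proof
    assume "\<forall>c'. H c' \<le> H c"
    then have "H cstar \<le> H c" by blast
    then have "hjb_penalty Q Qt \<zeta> \<gamma> ?y i c \<le> 0"
      by (simp add: H_eq penalty_cstar K_def)
    then show "fst c = \<zeta> i / \<gamma> \<and>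
      (\<forall>j. j \<noteq> i \<and> Q $ i $ j > 0 \<longrightarrow> snd c j = pi_star \<gamma> T Q Qt \<zeta> i t j)"
      using hjb_penalty_nonneg[OF genQt, of Q \<zeta> \<gamma> ?y i c] penalty_0_iff by simp
  qed
qed

lemma uval_classical_hjb_solution:
  assumes gamma_pos: "\<gamma> > 0" and genQ: "generator Q" and genQt: "generator Qt"
    and supp: "\<And>i j. i \<noteq> j \<Longrightarrow> (Q $ i $ j = 0 \<longleftrightarrow> Qt $ i $ j = 0)"
  shows "\<exists>ut uw uww :: real \<Rightarrow> real \<Rightarrow> real.
          continuous_on ({0..T} \<times> UNIV) (\<lambda>(t, w). ut t w)
        \<and> continuous_on ({0..T} \<times> UNIV) (\<lambda>(t, w). uw t w)
        \<and> continuous_on ({0..T} \<times> UNIV) (\<lambda>(t, w). uww t w)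
        \<and> (\<forall>t\<in>{0..T}. \<forall>w.
              ((\<lambda>s. uval \<gamma> T Q Qt \<zeta> i s w) has_real_derivative ut t w) (at t within {0..T})
            \<and> ((\<lambda>x. uval \<gamma> T Q Qt \<zeta> i t x) has_real_derivative uw t w) (at w)
            \<and> ((\<lambda>x. uw t x) has_real_derivative uww t w) (at w)
            \<and> uww t w = \<gamma>\<^sup>2 * uval \<gamma> T Q Qt \<zeta> i t w
            \<and> uww t w < 0)
        \<and> (\<forall>t\<in>{0..<T}. \<forall>w.
              let H = hjb_term Q Qt \<zeta> (\<lambda>j x. uval \<gamma> T Q Qt \<zeta> j t x) i w (uw t w) (uww t w);
                  cstar = (\<zeta> i / \<gamma>, pi_star \<gamma> T Q Qt \<zeta> i t)
              in ut t w + (SUP c. H c) = 0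
               \<and> (\<forall>c. H c \<le> H cstar)
               \<and> (\<forall>c. (\<forall>c'. H c' \<le> H c) \<longrightarrow>
                     fst c = \<zeta> i / \<gamma> \<and>
                     (\<forall>j. j \<noteq> i \<and> Q $ i $ j > 0 \<longrightarrow> snd c j = pi_star \<gamma> T Q Qt \<zeta> i t j)))"
proof -
  let ?u = "uval \<gamma> T Q Qt \<zeta> i"
  have phi_cont: "continuous_on ({0..T} \<times> UNIV) (\<lambda>x :: real \<times> real. phi T Q Qt \<zeta> (fst x))"
    by (rule continuous_on_compose2[OF continuous_on_phi continuous_on_fst]) auto
  have u_cont: "continuous_on ({0..T} \<times> UNIV) (\<lambda>(t, w). ?u t w)"
    unfolding uval_def case_prod_unfold by (intro continuous_intros phi_cont)
  have dt_cont: "continuous_on ({0..T} \<times> UNIV) (\<lambda>(t, w). uval_dt \<gamma> T Q Qt \<zeta> i t w)"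
    unfolding uval_dt_def uval_def ode_rhs_def case_prod_unfold
    by (intro continuous_intros phi_cont)
  have scaled_cont: "continuous_on ({0..T} \<times> UNIV) (\<lambda>(t, w). c * ?u t w)" for c
    using continuous_on_mult_left[OF u_cont, of c] by (simp add: case_prod_unfold)
  have dw_der: "((\<lambda>x. - \<gamma> * ?u t x) has_real_derivative \<gamma>\<^sup>2 * ?u t w) (at w)" for t w
    using DERIV_cmult[OF uval_has_real_derivative_w[of \<gamma> T Q Qt \<zeta> i t w], of "- \<gamma>"]
    by (simp add: power2_eq_square mult.assoc)
  have dww_neg: "\<gamma>\<^sup>2 * ?u t w < 0" for t w
    using gamma_pos by (simp add: uval_def)
  show ?thesis
    unfolding Let_def
    by (rule exI[of _ "uval_dt \<gamma> T Q Qt \<zeta> i"], rule exI[of _ "\<lambda>t w. - \<gamma> * ?u t w"],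
        rule exI[of _ "\<lambda>t w. \<gamma>\<^sup>2 * ?u t w"])
       (intro uval_hjb_equation[OF gamma_pos genQ genQt supp] dt_cont scaled_cont dw_der dww_neg
         uval_has_real_derivative_t[OF genQt] uval_has_real_derivative_w conjI ballI allI impI refl)
qed

theorem mainTheorem1:
  fixes Q Qt :: "real^'n^'n" and \<zeta> :: "'n \<Rightarrow> real" and \<gamma> T :: real
  assumes gamma_pos: "\<gamma> > 0" and T_pos: "T > 0"
    and genQ: "generator Q" and genQt: "generator Qt"
    and irrQ: "irreducible_gen Q" and irrQt: "irreducible_gen Qt"
    and supp: "\<And>i j. i \<noteq> j \<Longrightarrow> (Q $ i $ j = 0 \<longleftrightarrow> Qt $ i $ j = 0)"
  shows
    \<comment> \<open>phi solves the terminal value problem ...\<close>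
    "(\<forall>t\<in>{0..T}. \<forall>i. ((\<lambda>s. phi T Q Qt \<zeta> s $ i) has_real_derivative
          ode_rhs Q Qt \<zeta> (phi T Q Qt \<zeta> t) i) (at t within {0..T}))
     \<and> phi T Q Qt \<zeta> T = 0
     \<comment> \<open>... and is its unique solution\<close>
     \<and> (\<forall>\<psi> :: real \<Rightarrow> real^'n.
          (\<forall>t\<in>{0..T}. \<forall>i. ((\<lambda>s. \<psi> s $ i) has_real_derivative ode_rhs Q Qt \<zeta> (\<psi> t) i)
                (at t within {0..T})) \<and> \<psi> T = 0
          \<longrightarrow> (\<forall>t\<in>{0..T}. \<psi> t = phi T Q Qt \<zeta> t))
     \<comment> \<open>terminal condition of u\<close>
     \<and> (\<forall>i w. uval \<gamma> T Q Qt \<zeta> i T w = - exp (- \<gamma> * w))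
     \<comment> \<open>u is a classical solution of the HJB system, with the stated maximizers\<close>
     \<and> (\<forall>i. \<exists>ut uw uww :: real \<Rightarrow> real \<Rightarrow> real.
          continuous_on ({0..T} \<times> UNIV) (\<lambda>(t, w). ut t w)
        \<and> continuous_on ({0..T} \<times> UNIV) (\<lambda>(t, w). uw t w)
        \<and> continuous_on ({0..T} \<times> UNIV) (\<lambda>(t, w). uww t w)
        \<and> (\<forall>t\<in>{0..T}. \<forall>w.
              ((\<lambda>s. uval \<gamma> T Q Qt \<zeta> i s w) has_real_derivative ut t w) (at t within {0..T})
            \<and> ((\<lambda>x. uval \<gamma> T Q Qt \<zeta> i t x) has_real_derivative uw t w) (at w)
            \<and> ((\<lambda>x. uw t x) has_real_derivative uww t w) (at w)
            \<and> uww t w = \<gamma>\<^sup>2 * uval \<gamma> T Q Qt \<zeta> i t w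
            \<and> uww t w < 0)
        \<and> (\<forall>t\<in>{0..<T}. \<forall>w.
              let H = hjb_term Q Qt \<zeta> (\<lambda>j x. uval \<gamma> T Q Qt \<zeta> j t x) i w (uw t w) (uww t w);
                  cstar = (\<zeta> i / \<gamma>, pi_star \<gamma> T Q Qt \<zeta> i t)
              in ut t w + (SUP c. H c) = 0
               \<and> (\<forall>c. H c \<le> H cstar)
               \<and> (\<forall>c. (\<forall>c'. H c' \<le> H c) \<longrightarrow>
                     fst c = \<zeta> i / \<gamma> \<and>
                     (\<forall>j. j \<noteq> i \<and> Q $ i $ j > 0 \<longrightarrow> snd c j = pi_star \<gamma> T Q Qt \<zeta> i t j))))"
  using phi_has_real_derivative_ode_rhs[OF genQt] phi_terminal phi_unique[OF genQt]
    uval_classical_hjb_solution[OF gamma_pos genQ genQt supp]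
  by (auto simp: uval_def phi_terminal)

end
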